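(* Let $\mathcal{M}=(\Sigma,\Gamma,\mathcal{H},U,M)$ be a real QMM (all matrices $U_\sigma$ and $M_\gamma$ have real entries with respect to a fixed basis), let $n=\dim\mathcal{H}$, and let $\rho_s,\rho_t$ be density operators on $\mathcal{H}$ (not necessarily real). Then for every $k\in\mathbb{N}$, $\rho_s\sim_k\rho_t\iff\rho_s\sim_k^{\frac12 n(n+1)-1}\rho_t$, and $\rho_s\sim\rho_t\iff\rho_s\sim^{\frac12 n(n+1)-1}\rho_t$.
   Context: A quantum Mealy machine (QMM) is a tuple $\mathcal{M}=(\Sigma,\Gamma,\mathcal{H},U,M)$ where $\Sigma,\Gamma$ are finite alphabets, $\mathcal{H}$ a finite-dimensional complex Hilbert space, $U=\{U_\sigma\}_{\sigma\in\Sigma}$ unitary operators on $\mathcal{H}$, $M=\{M_\gamma\}_{\gamma\in\Gamma}$ linear operators with $\sum_\gamma M_\gamma^\dagger M_\gamma=I$. For a word $a$, $|a|$ is its length, $a[l:r]=a[l]\cdots a[r]$ (empty if $l>r$), $U_a=U_{a[|a|]}\cdots U_{a[1]}$, $U_\epsilon=I$. A scheduler for $a\in\Sigma^*$ is a finite non-decreasing integer sequence $\mathcal{S}=(s_1\le\dots\le s_{|\mathcal{S}|})$ in $\{0,\dots,|a|\}$ (possibly empty). With $s_0=0$, $s_{|\mathcal{S}|+1}=|a|$, $a_i=a[s_{i-1}+1:s_i]$. For $b\in\Gamma^{|\mathcal{S}|}$, $V_{b|a,\mathcal{S}}=U_{a_{|\mathcal{S}|+1}}M_{b_{|\mathcal{S}|}}U_{a_{|\mathcal{S}|}}\cdots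 M_{b_1}U_{a_1}$ and $\Pr^{\mathcal{M}}_\rho(b|a,\mathcal{S})=\operatorname{tr}(V_{b|a,\mathcal{S}}\rho V_{b|a,\mathcal{S}}^\dagger)$. $\rho_s\sim\rho_t$ means $\Pr_{\rho_s}^{\mathcal{M}}(b|a,\mathcal{S})=\Pr_{\rho_t}^{\mathcal{M}}(b|a,\mathcal{S})$ for all $a,\mathcal{S},b$; $\sim_k$ restricts to $|\mathcal{S}|\le k$; $\sim^m$ restricts to $|a|+|\mathcal{S}|\le m$; $\sim^m_k$ restricts to both $|\mathcal{S}|\le k$ and $|a|+|\mathcal{S}|\le m$. *)

theory Defs
  imports "HOL-Analysis.Analysis"
begin

text \<open>Operators on the n-dimensional Hilbert space C^n are complex n x n matrices
  indexed by a finite type 'n (n = CARD('n)). Input/output alphabets are finite types.\<close>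

type_synonym 'n cmat = "complex ^ 'n ^ 'n"

definition cadj :: "('n::finite) cmat \<Rightarrow> 'n cmat" where
  "cadj A = (\<chi> i j. cnj (A $ j $ i))"

definition is_qmm :: "('s \<Rightarrow> ('n::finite) cmat) \<Rightarrow> ('g::finite \<Rightarrow> 'n cmat) \<Rightarrow> bool" where
  "is_qmm U M \<longleftrightarrow>
     (\<forall>\<sigma>. U \<sigma> ** cadj (U \<sigma>) = mat 1 \<and> cadj (U \<sigma>) ** U \<sigma> = mat 1) \<and>
     (\<Sum>\<gamma>\<in>UNIV. cadj (M \<gamma>) ** M \<gamma>) = mat 1"

definition real_qmm :: "('s \<Rightarrow> ('n::finite) cmat) \<Rightarrow> ('g::finite \<Rightarrow> 'n cmat) \<Rightarrow> bool" where
  "real_qmm U M \<longleftrightarrow> is_qmm U M \<and>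
     (\<forall>\<sigma> i j. Im (U \<sigma> $ i $ j) = 0) \<and> (\<forall>\<gamma> i j. Im (M \<gamma> $ i $ j) = 0)"

definition density_op :: "('n::finite) cmat \<Rightarrow> bool" where
  "density_op \<rho> \<longleftrightarrow> cadj \<rho> = \<rho> \<and>
     (\<forall>x :: complex ^ 'n. 0 \<le> Re (\<Sum>i\<in>UNIV. cnj (x $ i) * (\<rho> *v x) $ i)) \<and>
     trace \<rho> = 1"

text \<open>U_a = U_{a[|a|]} ... U_{a[1]} (first letter applied first).\<close>
definition U_word :: "('s \<Rightarrow> ('n::finite) cmat) \<Rightarrow> 's list \<Rightarrow> 'n cmat" where
  "U_word U a = fold (\<lambda>\<sigma> acc. U \<sigma> ** acc) a (mat 1)"

text \<open>vop_aux U M a p S b: the operator for the part of the run after position p, where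
  S lists the remaining measurement positions and b the corresponding outcomes.\<close>
fun vop_aux :: "('s \<Rightarrow> ('n::finite) cmat) \<Rightarrow> ('g \<Rightarrow> 'n cmat) \<Rightarrow> 's list \<Rightarrow> nat
                 \<Rightarrow> nat list \<Rightarrow> 'g list \<Rightarrow> 'n cmat" where
  "vop_aux U M a p (s # S) (g # b) =
     vop_aux U M a s S b ** M g ** U_word U (take (s - p) (drop p a))"
| "vop_aux U M a p _ _ = U_word U (drop p a)"

text \<open>V_{b|a,S} = U_{a_{|S|+1}} M_{b_|S|} U_{a_|S|} ... M_{b_1} U_{a_1}.\<close>
definition vop :: "('s \<Rightarrow> ('n::finite) cmat) \<Rightarrow> ('g \<Rightarrow> 'n cmat) \<Rightarrow> 's list \<Rightarrow> nat list
                 \<Rightarrow> 'g list \<Rightarrow> 'n cmat" where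
  "vop U M a S b = vop_aux U M a 0 S b"

definition prob :: "('s \<Rightarrow> ('n::finite) cmat) \<Rightarrow> ('g \<Rightarrow> 'n cmat) \<Rightarrow> 'n cmat \<Rightarrow> 'g list
                 \<Rightarrow> 's list \<Rightarrow> nat list \<Rightarrow> complex" where
  "prob U M \<rho> b a S = trace (vop U M a S b ** \<rho> ** cadj (vop U M a S b))"

definition scheduler :: "'s list \<Rightarrow> nat list \<Rightarrow> bool" where
  "scheduler a S \<longleftrightarrow> sorted S \<and> (\<forall>s\<in>set S. s \<le> length a)"

definition equiv_on :: "('s \<Rightarrow> ('n::finite) cmat) \<Rightarrow> ('g \<Rightarrow> 'n cmat)
     \<Rightarrow> ('s list \<Rightarrow> nat list \<Rightarrow> bool) \<Rightarrow> 'n cmat \<Rightarrow> 'n cmat \<Rightarrow> bool" where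
  "equiv_on U M P \<rho>s \<rho>t \<longleftrightarrow>
     (\<forall>a S b. scheduler a S \<longrightarrow> length b = length S \<longrightarrow> P a S \<longrightarrow>
        prob U M \<rho>s b a S = prob U M \<rho>t b a S)"

definition sim where "sim U M = equiv_on U M (\<lambda>a S. True)"
definition sim_k where "sim_k U M k = equiv_on U M (\<lambda>a S. length S \<le> k)"
definition sim_m where "sim_m U M m = equiv_on U M (\<lambda>a S. length a + length S \<le> m)"
definition sim_km where
  "sim_km U M k m = equiv_on U M (\<lambda>a S. length S \<le> k \<and> length a + length S \<le> m)"

end

theory Submission
  imports Defs
begin

text \<open>Let \<open>E(l, j)\<close> be the set of effects \<open>V\<^sup>\<dagger>V\<close> of the operators \<open>V = V\<^bsub>b|a,S\<^esub>\<close> with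
  \<open>|S| \<le> l\<close> and \<open>|a| + |S| \<le> j\<close>. Since \<open>Pr\<^sub>\<rho>(b|a,S) = tr(V\<^sup>\<dagger>V \<rho>)\<close>, the relation
  \<open>\<sim>\<^sup>j\<^sub>l\<close> says that \<open>\<rho>\<^sub>s\<close> and \<open>\<rho>\<^sub>t\<close> agree on \<open>E(l, j)\<close>, hence on its real span \<open>W(l, j)\<close>.
  Removing the first letter or the first measurement of a run shows that \<open>E(l+1, j+1)\<close>
  consists of \<open>I\<close>, the sandwiches \<open>U\<^sub>\<sigma>\<^sup>\<dagger> X U\<^sub>\<sigma>\<close> of \<open>X \<in> E(l+1, j)\<close> and the sandwiches
  \<open>M\<^sub>\<gamma>\<^sup>\<dagger> X M\<^sub>\<gamma>\<close> of \<open>X \<in> E(l, j)\<close>. So if \<open>W(l, \<cdot>)\<close> and \<open>W(l+1, \<cdot>)\<close> are both stationary at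
  step \<open>j\<close>, then \<open>W(l+1, \<cdot>)\<close> is stationary from \<open>j\<close> on, and an induction on \<open>l\<close> shows that
  \<open>dim W(l, j) > j\<close> as long as \<open>W(l, \<cdot>)\<close> is not yet stable at \<open>j\<close>. For a real QMM every
  effect is a real symmetric matrix, so \<open>dim W(l, j) \<le> n(n+1)/2\<close> and every \<open>W(l, \<cdot>)\<close> is
  stable from \<open>n(n+1)/2 - 1\<close> on.\<close>

locale subspace_grid =
  fixes W :: "nat \<Rightarrow> nat \<Rightarrow> 'v::euclidean_space set" and N :: nat
  assumes subspace_grid: "subspace (W l j)"
    and grid_mono_right: "W l j \<subseteq> W l (Suc j)"
    and grid_mono_up: "W l j \<subseteq> W (Suc l) j"
    and grid_bottom_const: "W 0 j = W 0 0"
    and grid_propagate: "W (Suc l) j = W (Suc l) (Suc j) \<Longrightarrow> W l j = W l (Suc j)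
                          \<Longrightarrow> W (Suc l) (Suc j) = W (Suc l) (Suc (Suc j))"
    and grid_dim_le: "dim (W l j) \<le> N"
    and grid_dim_pos: "0 < dim (W l 0)"
begin

definition stable_from :: "nat \<Rightarrow> nat \<Rightarrow> bool" where
  "stable_from l j \<longleftrightarrow> (\<forall>j'\<ge>j. W l j' = W l j)"

lemma grid_mono_right_le: "j \<le> j' \<Longrightarrow> W l j \<subseteq> W l j'"
  by (rule lift_Suc_mono_le[of "W l"]) (use grid_mono_right in auto)

lemma stable_fromI:
  assumes "\<And>i. j \<le> i \<Longrightarrow> W l i = W l (Suc i)"
  shows "stable_from l j"
proof -
  have "W l j' = W l j" if "j \<le> j'" for j'
    using that
  proof (induction j' rule: dec_induct)
    case (step i)
    with assms[of i] show ?case by argo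
  qed simp
  then show ?thesis unfolding stable_from_def by blast
qed

lemma stable_from_Suc_iff:
  "stable_from l j \<longleftrightarrow> W l j = W l (Suc j) \<and> stable_from l (Suc j)"
proof
  assume "stable_from l j"
  then have "W l j' = W l j" if "j \<le> j'" for j'
    using that unfolding stable_from_def by blast
  then show "W l j = W l (Suc j) \<and> stable_from l (Suc j)"
    unfolding stable_from_def by (metis Suc_leD le_refl)
next
  assume "W l j = W l (Suc j) \<and> stable_from l (Suc j)"
  then show "stable_from l j"
    unfolding stable_from_def by (metis le_antisym not_less_eq_eq)
qed

lemma span_grid [simp]: "span (W l j) = W l j"
  using span_eq_iff subspace_grid by blast

lemma dim_grid_Suc_less:
  assumes "W l j \<noteq> W l (Suc j)"
  shows "dim (W l j) < dim (W l (Suc j))"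
  using assms grid_mono_right[of l j] by (intro dim_psubset) auto

lemma stable_from_up:
  assumes "stable_from l j" and "W (Suc l) j = W (Suc l) (Suc j)"
  shows "stable_from (Suc l) j"
proof (rule stable_fromI)
  fix i assume "j \<le> i"
  then show "W (Suc l) i = W (Suc l) (Suc i)"
  proof (induction i rule: dec_induct)
    case base then show ?case using assms(2) .
  next
    case (step i)
    have "W l i = W l (Suc i)"
      using assms(1) \<open>j \<le> i\<close> unfolding stable_from_def by (metis le_SucI)
    with step.IH show ?case by (rule grid_propagate)
  qed
qed

text \<open>Each step before stabilisation raises the dimension: at level \<open>l + 1\<close> either the
  step itself is strict, or (by \<open>grid_propagate\<close>) level \<open>l\<close> is not yet stable and has
  already gained the required dimension.\<close>

lemma dim_grid_if_unstable: "\<not> stable_from l j \<Longrightarrow> j < dim (W l j)"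
proof (induction l arbitrary: j)
  case 0
  have "W 0 j' = W 0 j" for j'
    by (simp only: grid_bottom_const[of j'] grid_bottom_const[of j])
  then have "stable_from 0 j" unfolding stable_from_def by blast
  with 0 show ?case by contradiction
next
  case (Suc l)
  note unstable_level_dim = Suc.IH
  show ?case using Suc.prems
  proof (induction j)
    case 0
    show ?case using grid_dim_pos by simp
  next
    case (Suc j)
    have unstable_j: "\<not> stable_from (Suc l) j"
      using Suc.prems stable_from_Suc_iff[of "Suc l" j] by blast
    show ?case
    proof (cases "W (Suc l) j = W (Suc l) (Suc j)")
      case False
      with Suc.IH[OF unstable_j] dim_grid_Suc_less[OF False] show ?thesis by linarith
    next
      case True
      have unstable_below: "\<not> stable_from l j"
        using stable_from_up[OF _ True] unstable_j by blast
      then consider "W l j \<noteq> W l (Suc j)" | "\<not> stable_from l (Suc j)"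
        using stable_from_Suc_iff[of l j] by blast
      then have "Suc j < dim (W l (Suc j))"
      proof cases
        case 1
        with dim_grid_Suc_less[OF 1] unstable_level_dim[OF unstable_below] show ?thesis by linarith
      qed (rule unstable_level_dim)
      also have "\<dots> \<le> dim (W (Suc l) (Suc j))" by (rule dim_subset[OF grid_mono_up])
      finally show ?thesis .
    qed
  qed
qed

theorem grid_stabilises: "W l j \<subseteq> W l (N - 1)"
proof (cases "j \<le> N - 1")
  case True
  then show ?thesis by (rule grid_mono_right_le)
next
  case False
  then have late: "N - 1 \<le> j" by simp
  have "W l j = W l (N - 1)"
  proof (cases "stable_from l (N - 1)")
    case True
    with late show ?thesis unfolding stable_from_def by blast
  next
    case False
    have "N \<le> dim (W l (N - 1))"
      using dim_grid_if_unstable[OF False] grid_dim_le[of l 0] grid_dim_pos[of l] by linarith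
    then have "dim (W l j) \<le> dim (W l (N - 1))" using grid_dim_le[of l j] by linarith
    from dim_eq_span[OF grid_mono_right_le[OF late] this] show ?thesis by simp
  qed
  then show ?thesis by simp
qed

end

lemma fold_U_word:
  fixes U :: "'s \<Rightarrow> 'n::finite cmat" and A :: "'n cmat"
  shows "fold (\<lambda>\<sigma> acc. U \<sigma> ** acc) a A = U_word U a ** A"
proof (induction a arbitrary: A)
  case Nil
  then show ?case by (simp add: U_word_def)
next
  case (Cons \<sigma> a)
  from Cons.IH[of "U \<sigma> ** A"] Cons.IH[of "U \<sigma>"] show ?case
    by (simp add: U_word_def matrix_mul_assoc)
qed

lemma U_word_Nil [simp]: "U_word U [] = mat 1"
  by (simp add: U_word_def)

lemma U_word_Cons: "U_word U (\<sigma> # a) = U_word U a ** U \<sigma>"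
  using fold_U_word[of U a "U \<sigma>"] by (simp add: U_word_def)

lemma vop_aux_Cons_shift:
  "vop_aux U M (\<sigma> # a) (Suc p) (map Suc S) b = vop_aux U M a p S b"
  by (induction U M a p S b rule: vop_aux.induct) auto

lemma vop_Cons: "vop U M (\<sigma> # a) (map Suc S) b = vop U M a S b ** U \<sigma>"
proof (cases S; cases b)
  fix s S' g b' assume "S = s # S'" "b = g # b'"
  then show ?thesis by (simp add: vop_def vop_aux_Cons_shift U_word_Cons matrix_mul_assoc)
qed (simp_all add: vop_def U_word_Cons)

lemma vop_measure_first: "vop U M a (0 # S) (g # b) = vop U M a S b ** M g"
  by (simp add: vop_def)

lemma cadj_mult: "cadj (A ** B) = cadj B ** cadj A"
  by (simp add: cadj_def matrix_matrix_mult_def vec_eq_iff cnj_sum mult.commute)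

lemma cadj_mat1 [simp]: "cadj (mat 1 :: 'n::finite cmat) = mat 1"
  by (simp add: cadj_def mat_def vec_eq_iff)

lemma mat1_neq_0: "(mat 1 :: 'a::zero_neq_one^'n^'n) \<noteq> 0"
proof
  fix i :: 'n
  assume "mat 1 = (0 :: 'a^'n^'n)"
  then have "mat 1 $ i $ i = (0 :: 'a^'n^'n) $ i $ i" by simp
  then show False by (simp add: mat_def)
qed

lemma U_word_unitary:
  assumes "is_qmm U M"
  shows "cadj (U_word U a) ** U_word U a = mat 1"
proof (induction a)
  case (Cons \<sigma> a)
  have "cadj (U_word U (\<sigma> # a)) ** U_word U (\<sigma> # a)
        = cadj (U \<sigma>) ** (cadj (U_word U a) ** U_word U a) ** U \<sigma>"
    by (simp add: U_word_Cons cadj_mult matrix_mul_assoc)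
  also have "\<dots> = mat 1"
    using Cons.IH assms unfolding is_qmm_def by simp
  finally show ?case .
qed simp

definition effect :: "'n::finite cmat \<Rightarrow> 'n cmat" where
  "effect V = cadj V ** V"

definition sandwich :: "'n::finite cmat \<Rightarrow> 'n cmat \<Rightarrow> 'n cmat" where
  "sandwich A X = cadj A ** X ** A"

lemma effect_mult: "effect (V ** A) = sandwich A (effect V)"
  by (simp add: effect_def sandwich_def cadj_mult matrix_mul_assoc)

definition effects :: "('s \<Rightarrow> 'n::finite cmat) \<Rightarrow> ('g \<Rightarrow> 'n cmat) \<Rightarrow> nat \<Rightarrow> nat \<Rightarrow> 'n cmat set"
  where "effects U M l j = {effect (vop U M a S b) | a S b. scheduler a S \<and> length b = length S \<and>
                             length S \<le> l \<and> length a + length S \<le> j}"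

lemma effectsI:
  assumes "scheduler a S" "length b = length S" "length S \<le> l" "length a + length S \<le> j"
  shows "effect (vop U M a S b) \<in> effects U M l j"
  using assms unfolding effects_def by blast

lemma effectsE:
  assumes "X \<in> effects U M l j"
  obtains a S b where "X = effect (vop U M a S b)" "scheduler a S" "length b = length S"
    "length S \<le> l" "length a + length S \<le> j"
  using assms unfolding effects_def by blast

lemma effects_mono:
  assumes "l \<le> l'" "j \<le> j'"
  shows "effects U M l j \<subseteq> effects U M l' j'"
proof
  fix X assume "X \<in> effects U M l j"
  then show "X \<in> effects U M l' j'"
    by (rule effectsE) (use assms in \<open>auto intro: effectsI\<close>)
qed

lemma mat1_in_effects: "mat 1 \<in> effects U M l j"
proof -
  have "effect (vop U M [] [] []) \<in> effects U M l j"
    by (rule effectsI) (simp_all add: scheduler_def)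
  then show ?thesis by (simp add: vop_def effect_def)
qed

lemma sandwich_U_in_effects:
  assumes "X \<in> effects U M l j"
  shows "sandwich (U \<sigma>) X \<in> effects U M l (Suc j)"
  using assms
proof (rule effectsE)
  fix a S b assume X: "X = effect (vop U M a S b)" "scheduler a S" "length b = length S"
    "length S \<le> l" "length a + length S \<le> j"
  have "scheduler (\<sigma> # a) (map Suc S)"
    using X(2) by (auto simp: scheduler_def sorted_map)
  then have "effect (vop U M (\<sigma> # a) (map Suc S) b) \<in> effects U M l (Suc j)"
    by (rule effectsI) (use X in simp_all)
  then show ?thesis using X(1) by (simp add: vop_Cons effect_mult)
qed

lemma sandwich_M_in_effects:
  assumes "X \<in> effects U M l j"
  shows "sandwich (M g) X \<in> effects U M (Suc l) (Suc j)"
  using assms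
proof (rule effectsE)
  fix a S b assume X: "X = effect (vop U M a S b)" "scheduler a S" "length b = length S"
    "length S \<le> l" "length a + length S \<le> j"
  have "scheduler a (0 # S)"
    using X(2) by (auto simp: scheduler_def)
  then have "effect (vop U M a (0 # S) (g # b)) \<in> effects U M (Suc l) (Suc j)"
    by (rule effectsI) (use X in simp_all)
  then show ?thesis using X(1) by (simp add: vop_measure_first effect_mult)
qed

lemma effect_vop_Nil:
  assumes "is_qmm U M"
  shows "effect (vop U M a [] b) = mat 1"
  using U_word_unitary[OF assms] by (simp add: vop_def effect_def)

lemma effects_0:
  assumes "is_qmm U M"
  shows "effects U M 0 j = {mat 1}"
proof (rule antisym)
  show "effects U M 0 j \<subseteq> {mat 1}"
    using effect_vop_Nil[OF assms] unfolding effects_def by auto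
qed (simp add: mat1_in_effects)

lemma effects_Suc_cases:
  assumes "is_qmm U M" and "X \<in> effects U M (Suc l) (Suc j)"
  obtains "X = mat 1"
  | \<sigma> Y where "Y \<in> effects U M (Suc l) j" "X = sandwich (U \<sigma>) Y"
  | g Y where "Y \<in> effects U M l j" "X = sandwich (M g) Y"
proof -
  obtain a S b where X: "X = effect (vop U M a S b)" "scheduler a S" "length b = length S"
    "length S \<le> Suc l" "length a + length S \<le> Suc j"
    using assms(2) by (rule effectsE)
  show thesis
  proof (cases S)
    case Nil
    with X(1) effect_vop_Nil[OF assms(1)] that(1) show ?thesis by simp
  next
    case (Cons s S')
    then obtain g b' where b: "b = g # b'" using X(3) by (cases b) auto
    show ?thesis
    proof (cases s)
      case 0
      have "X = sandwich (M g) (effect (vop U M a S' b'))"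
        using X(1) Cons b 0 by (simp add: vop_measure_first effect_mult)
      moreover have "effect (vop U M a S' b') \<in> effects U M l j"
        by (rule effectsI) (use X Cons b in \<open>auto simp: scheduler_def\<close>)
      ultimately show ?thesis by (rule that(3)[rotated])
    next
      case (Suc _)
      define S'' where "S'' = map (\<lambda>x. x - 1) S"
      have positive: "\<forall>x\<in>set S. 0 < x"
        using X(2) Cons Suc unfolding scheduler_def by auto
      then have S: "S = map Suc S''" unfolding S''_def by (induction S) auto
      obtain \<sigma> a' where a: "a = \<sigma> # a'"
        using X(2) Cons Suc unfolding scheduler_def by (cases a) auto
      have "X = sandwich (U \<sigma>) (effect (vop U M a' S'' b))"
        using X(1) a S by (simp add: vop_Cons effect_mult)
      moreover have "scheduler a' S''"
        using X(2) a S unfolding scheduler_def by (auto simp: sorted_map)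
      then have "effect (vop U M a' S'' b) \<in> effects U M (Suc l) j"
        by (rule effectsI) (use X a S in simp_all)
      ultimately show ?thesis by (rule that(2)[rotated])
    qed
  qed
qed

lemma linear_mult_left: "linear (\<lambda>X :: 'a::real_algebra_1^'n^'m. A ** X)"
  by (rule linearI) (simp_all add: matrix_add_ldistrib matrix_scalar_ac scalar_matrix_assoc[symmetric])

lemma linear_mult_right: "linear (\<lambda>X :: 'a::real_algebra_1^'n^'m. X ** A)"
proof (rule linearI)
  show "(X + Y) ** A = X ** A + Y ** A" for X Y :: "'a^'n^'m"
    by (simp add: matrix_matrix_mult_def vec_eq_iff sum.distrib distrib_right)
qed (simp add: scalar_matrix_assoc)

lemma linear_sandwich: "linear (sandwich A)"
  using linear_compose[OF linear_mult_left[of "cadj A"] linear_mult_right[of A]]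
  by (simp add: o_def sandwich_def[abs_def])

lemma sandwich_in_span:
  assumes "Y \<in> span S" and "sandwich A ` S \<subseteq> T"
  shows "sandwich A Y \<in> span T"
proof -
  have "sandwich A Y \<in> span (sandwich A ` S)"
    using assms(1) span_linear_image[OF linear_sandwich] by blast
  with span_mono[OF assms(2)] show ?thesis by blast
qed

lemma span_effects_propagate:
  assumes "is_qmm U M"
    and "span (effects U M (Suc l) j) = span (effects U M (Suc l) (Suc j))"
    and "span (effects U M l j) = span (effects U M l (Suc j))"
  shows "span (effects U M (Suc l) (Suc j)) = span (effects U M (Suc l) (Suc (Suc j)))"
proof (rule antisym)
  show "span (effects U M (Suc l) (Suc j)) \<subseteq> span (effects U M (Suc l) (Suc (Suc j)))"
    by (rule span_mono, rule effects_mono) simp_all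
  have "effects U M (Suc l) (Suc (Suc j)) \<subseteq> span (effects U M (Suc l) (Suc j))"
  proof (rule subsetI)
    fix X assume "X \<in> effects U M (Suc l) (Suc (Suc j))"
    then show "X \<in> span (effects U M (Suc l) (Suc j))"
    proof (rule effects_Suc_cases[OF assms(1)])
      assume "X = mat 1"
      then show ?thesis using mat1_in_effects span_base by blast
    next
      fix \<sigma> Y assume Y: "Y \<in> effects U M (Suc l) (Suc j)" and X: "X = sandwich (U \<sigma>) Y"
      from Y assms(2) have "Y \<in> span (effects U M (Suc l) j)" by (simp add: span_base)
      moreover have "sandwich (U \<sigma>) ` effects U M (Suc l) j \<subseteq> effects U M (Suc l) (Suc j)"
        by (rule image_subsetI) (rule sandwich_U_in_effects)
      ultimately show ?thesis unfolding X by (rule sandwich_in_span)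
    next
      fix g Y assume Y: "Y \<in> effects U M l (Suc j)" and X: "X = sandwich (M g) Y"
      from Y assms(3) have "Y \<in> span (effects U M l j)" by (simp add: span_base)
      moreover have "sandwich (M g) ` effects U M l j \<subseteq> effects U M (Suc l) (Suc j)"
        by (rule image_subsetI) (rule sandwich_M_in_effects)
      ultimately show ?thesis unfolding X by (rule sandwich_in_span)
    qed
  qed
  then show "span (effects U M (Suc l) (Suc (Suc j))) \<subseteq> span (effects U M (Suc l) (Suc j))"
    by (rule span_minimal) (rule subspace_span)
qed

definition real_matrix :: "'n::finite cmat \<Rightarrow> bool" where
  "real_matrix A \<longleftrightarrow> (\<forall>i j. A $ i $ j \<in> \<real>)"

lemma real_matrix_mult: "real_matrix A \<Longrightarrow> real_matrix B \<Longrightarrow> real_matrix (A ** B)"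
  unfolding real_matrix_def matrix_matrix_mult_def by (auto intro!: sum_in_Reals Reals_mult)

lemma real_matrix_mat1: "real_matrix (mat 1)"
  unfolding real_matrix_def mat_def by auto

lemma real_matrix_U_word: "(\<And>\<sigma>. real_matrix (U \<sigma>)) \<Longrightarrow> real_matrix (U_word U a)"
  by (induction a) (auto simp: U_word_Cons real_matrix_mat1 real_matrix_mult)

lemma real_matrix_vop_aux:
  "(\<And>\<sigma>. real_matrix (U \<sigma>)) \<Longrightarrow> (\<And>g. real_matrix (M g)) \<Longrightarrow> real_matrix (vop_aux U M a p S b)"
  by (induction U M a p S b rule: vop_aux.induct) (auto simp: real_matrix_U_word real_matrix_mult)

lemma real_symmetric_effect:
  assumes "real_matrix V"
  shows "real_matrix (effect V)" and "effect V $ i $ j = effect V $ j $ i"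
proof -
  have cnj: "cnj (V $ i $ j) = V $ i $ j" for i j
    using assms Reals_cnj_iff unfolding real_matrix_def by blast
  show "real_matrix (effect V)"
    using assms unfolding real_matrix_def effect_def cadj_def matrix_matrix_mult_def
    by (auto intro!: sum_in_Reals Reals_mult simp: cnj)
  show "effect V $ i $ j = effect V $ j $ i"
    unfolding effect_def cadj_def matrix_matrix_mult_def by (simp add: cnj mult.commute)
qed

text \<open>\<open>doubletons\<close> includes the singletons \<open>{a, a}\<close>, so the \<open>sym_unit\<close>s also cover the diagonal.\<close>

definition doubletons :: "'a set set" where
  "doubletons = {{a, b} | a b. True}"

definition sym_unit :: "'n set \<Rightarrow> 'n::finite cmat" where
  "sym_unit P = (\<chi> a b. if {a, b} = P then 1 else 0)"

lemma card_doubletons_le: "card (doubletons :: 'n::finite set set) \<le> CARD('n) * (CARD('n) + 1) div 2"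
proof -
  let ?card_is = "\<lambda>k. {P :: 'n set. card P = k}"
  have "doubletons \<subseteq> ?card_is 1 \<union> ?card_is 2"
  proof
    fix P :: "'n set" assume "P \<in> doubletons"
    then obtain a b where "P = {a, b}" unfolding doubletons_def by blast
    then show "P \<in> ?card_is 1 \<union> ?card_is 2" by (cases "a = b") simp_all
  qed
  then have "card (doubletons :: 'n set set) \<le> card (?card_is 1 \<union> ?card_is 2)"
    by (rule card_mono[rotated]) simp
  also have "\<dots> \<le> card (?card_is 1) + card (?card_is 2)"
    by (rule card_Un_le)
  also have "\<dots> = CARD('n) + CARD('n) * (CARD('n) - 1) div 2"
    using n_subsets[of "UNIV :: 'n set" 1] n_subsets[of "UNIV :: 'n set" 2] by (simp add: choose_two)
  also have "\<dots> = CARD('n) * (CARD('n) + 1) div 2"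
    by (cases "CARD('n)") (simp_all add: algebra_simps)
  finally show ?thesis .
qed

lemma real_symmetric_in_span_sym_units:
  fixes X :: "'n::finite cmat"
  assumes real: "real_matrix X" and symmetric: "\<And>i j. X $ i $ j = X $ j $ i"
  shows "X \<in> span (sym_unit ` doubletons)"
proof -
  define rep where "rep P = (SOME ab. P = {fst ab, snd ab})" for P :: "'n set"
  define c where "c P = Re (X $ fst (rep P) $ snd (rep P))" for P
  have c: "c {a, b} = Re (X $ a $ b)" for a b
  proof -
    have "{a, b} = {fst (rep {a, b}), snd (rep {a, b})}"
      unfolding rep_def by (rule someI[of _ "(a, b)"]) simp
    then show ?thesis unfolding c_def using symmetric by (auto simp: doubleton_eq_iff)
  qed
  have "X = (\<Sum>P\<in>doubletons. c P *\<^sub>R sym_unit P)"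
    unfolding vec_eq_iff
  proof (intro allI)
    fix a b
    have "(\<Sum>P\<in>doubletons. c P *\<^sub>R sym_unit P) $ a $ b
          = (\<Sum>P\<in>doubletons. if {a, b} = P then c P *\<^sub>R 1 else 0)"
      by (simp add: sum_component sym_unit_def if_distrib cong: if_cong)
    also have "\<dots> = of_real (Re (X $ a $ b))"
      by (simp add: sum.delta c scaleR_conv_of_real) (auto simp: doubletons_def)
    also have "\<dots> = X $ a $ b"
      using real unfolding real_matrix_def by (simp add: of_real_Re)
    finally show "X $ a $ b = (\<Sum>P\<in>doubletons. c P *\<^sub>R sym_unit P) $ a $ b" ..
  qed
  also have "\<dots> \<in> span (sym_unit ` doubletons)"
    by (intro span_sum span_scale span_base imageI)
  finally show ?thesis .
qed

lemma dim_effects_le: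
  fixes U :: "'s \<Rightarrow> 'n::finite cmat" and M :: "'g::finite \<Rightarrow> 'n cmat"
  assumes "real_qmm U M"
  shows "dim (effects U M l j) \<le> CARD('n) * (CARD('n) + 1) div 2"
proof -
  have "\<And>\<sigma>. real_matrix (U \<sigma>)" "\<And>g. real_matrix (M g)"
    using assms unfolding real_qmm_def real_matrix_def by (simp_all add: complex_is_Real_iff)
  then have "effects U M l j \<subseteq> span (sym_unit ` (doubletons :: 'n set set))"
    by (auto elim!: effectsE intro!: real_symmetric_in_span_sym_units real_symmetric_effect
        simp: vop_def real_matrix_vop_aux)
  then have "dim (effects U M l j) \<le> card (sym_unit ` (doubletons :: 'n set set))"
    by (rule dim_le_card) simp
  also have "\<dots> \<le> card (doubletons :: 'n set set)"
    by (rule card_image_le) simp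
  also have "\<dots> \<le> CARD('n) * (CARD('n) + 1) div 2"
    by (rule card_doubletons_le)
  finally show ?thesis .
qed

lemma span_effects_stabilise:
  fixes U :: "'s \<Rightarrow> 'n::finite cmat" and M :: "'g::finite \<Rightarrow> 'n cmat"
  assumes "real_qmm U M"
  shows "effects U M l j \<subseteq> span (effects U M l (CARD('n) * (CARD('n) + 1) div 2 - 1))"
proof -
  have qmm: "is_qmm U M" using assms unfolding real_qmm_def by simp
  interpret subspace_grid "\<lambda>l j. span (effects U M l j)" "CARD('n) * (CARD('n) + 1) div 2"
  proof
    show "span (effects U M l j) \<subseteq> span (effects U M l (Suc j))"
      and "span (effects U M l j) \<subseteq> span (effects U M (Suc l) j)" for l j
      by (intro span_mono effects_mono; simp)+
    show "span (effects U M 0 j) = span (effects U M 0 0)" for j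
      by (simp add: effects_0[OF qmm])
    show "dim (span (effects U M l j)) \<le> CARD('n) * (CARD('n) + 1) div 2" for l j
      using dim_effects_le[OF assms] by simp
    show "0 < dim (span (effects U M l 0))" for l
    proof -
      have "(1::nat) = dim {mat 1 :: 'n cmat}"
        using mat1_neq_0 by simp
      also have "\<dots> \<le> dim (effects U M l 0)"
        using mat1_in_effects by (intro dim_subset) simp
      finally show ?thesis by simp
    qed
  qed (rule subspace_span, rule span_effects_propagate[OF qmm])
  show ?thesis
    by (rule subset_trans[OF span_superset grid_stabilises])
qed

lemma prob_eq_trace_effect: "prob U M \<rho> b a S = trace (effect (vop U M a S b) ** \<rho>)"
  unfolding prob_def effect_def by (metis matrix_mul_assoc trace_mul_sym)

lemma linear_trace: "linear (trace :: 'a::real_algebra_1^'n^'n \<Rightarrow> 'a)"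
  by (rule linearI) (simp_all add: trace_def sum.distrib scaleR_sum_right)

lemma trace_mult_eq_on_span:
  fixes A A' Y :: "'a::real_algebra_1^'n^'n"
  assumes "\<And>X. X \<in> B \<Longrightarrow> trace (X ** A) = trace (X ** A')" and "Y \<in> span B"
  shows "trace (Y ** A) = trace (Y ** A')"
proof -
  have "linear (\<lambda>X. trace (X ** C))" for C :: "'a^'n^'n"
    using linear_compose[OF linear_mult_right linear_trace] by (simp add: o_def)
  from linear_eq_on_span[OF this this assms] show ?thesis .
qed

lemma sim_k_iff_sim_km:
  fixes U :: "'s::finite \<Rightarrow> 'n::finite cmat" and M :: "'g::finite \<Rightarrow> 'n cmat"
  assumes "real_qmm U M"
  shows "sim_k U M k \<rho>s \<rho>t \<longleftrightarrow> sim_km U M k (CARD('n) * (CARD('n) + 1) div 2 - 1) \<rho>s \<rho>t"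
    (is "_ \<longleftrightarrow> sim_km U M k ?m \<rho>s \<rho>t")
proof
  assume "sim_k U M k \<rho>s \<rho>t"
  then show "sim_km U M k ?m \<rho>s \<rho>t"
    unfolding sim_k_def sim_km_def equiv_on_def by blast
next
  assume short: "sim_km U M k ?m \<rho>s \<rho>t"
  have agree: "trace (X ** \<rho>s) = trace (X ** \<rho>t)" if "X \<in> effects U M k ?m" for X
    using that
  proof (rule effectsE)
    fix a S b assume "X = effect (vop U M a S b)" "scheduler a S" "length b = length S"
      "length S \<le> k" "length a + length S \<le> ?m"
    with short show ?thesis
      unfolding sim_km_def equiv_on_def by (simp add: prob_eq_trace_effect)
  qed
  show "sim_k U M k \<rho>s \<rho>t"
    unfolding sim_k_def equiv_on_def
  proof (intro allI impI)
    fix a :: "'s list" and S and b :: "'g list"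
    assume "scheduler a S" "length b = length S" "length S \<le> k"
    then have "effect (vop U M a S b) \<in> effects U M k (length a + length S)"
      by (intro effectsI) simp_all
    then have "effect (vop U M a S b) \<in> span (effects U M k ?m)"
      using span_effects_stabilise[OF assms] by blast
    with agree show "prob U M \<rho>s b a S = prob U M \<rho>t b a S"
      unfolding prob_eq_trace_effect by (rule trace_mult_eq_on_span)
  qed
qed

lemma sim_iff_all_sim_k: "sim U M \<rho>s \<rho>t \<longleftrightarrow> (\<forall>k. sim_k U M k \<rho>s \<rho>t)"
  unfolding sim_def sim_k_def equiv_on_def by blast

lemma sim_m_iff_all_sim_km: "sim_m U M m \<rho>s \<rho>t \<longleftrightarrow> (\<forall>k. sim_km U M k m \<rho>s \<rho>t)"
  unfolding sim_m_def sim_km_def equiv_on_def by blast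

theorem mainTheorem2:
  fixes U :: "'s::finite \<Rightarrow> ('n::finite) cmat" and M :: "'g::finite \<Rightarrow> 'n cmat"
    and \<rho>s \<rho>t :: "'n cmat"
  assumes "real_qmm U M"
    and "density_op \<rho>s" and "density_op \<rho>t"
  shows "(\<forall>k::nat. sim_k U M k \<rho>s \<rho>t \<longleftrightarrow>
                    sim_km U M k (CARD('n) * (CARD('n) + 1) div 2 - 1) \<rho>s \<rho>t) \<and>
         (sim U M \<rho>s \<rho>t \<longleftrightarrow> sim_m U M (CARD('n) * (CARD('n) + 1) div 2 - 1) \<rho>s \<rho>t)"
  using sim_k_iff_sim_km[OF assms(1)] by (simp add: sim_iff_all_sim_k sim_m_iff_all_sim_km)

end
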